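(* Let $k=2^{\ell}$ with $\ell\ge2$ an integer and $q=4k$. Let $f\in\mathbb F_q[X,Y]$ be a local permutation polynomial whose permutation polynomial tuple consists of the $q$ elements of the group $G_1=\{b^ja^i:0\le j\le 2k-1,\ 0\le i\le 1\}$ (in some order), where $a$ and $b$ are as defined below. Then $f$ has a companion.
   Context: The elements of $\mathbb F_q$ are enumerated as $\mathbb F_q=\{c_0,\dots,c_{q-1}\}$; $\mathfrak S_q$ is the symmetric group of permutations of $\mathbb F_q$, composed right to left, $(\sigma\tau)(x)=\sigma(\tau(x))$, written in cycle notation. $a=(c_0,c_1)(c_2,c_3)\cdots(c_{4k-2},c_{4k-1})$ and $b=C_1C_2$, where $C_1$ is the $2k$-cycle whose entries in order are: for $m=0,1,\dots,\frac{k-2}{2}$ the pair $c_{2m},c_{2(2m+k-1)}$; then for $n=0,1,\dots,\frac{k-4}{2}$ the pair $c_{2n+k},c_{2(2n+k)}$; then $c_{4k-1},c_{4k-4}$; and $C_2$ is the $2k$-cycle whose entries in order are: for $m=0,1,\dots,\frac{k-2}{2}$ the pair $c_{2m+1},c_{2(2m+k)+1}$; then for $n=0,1,\dots,\frac{k-4}{2}$ the pair $c_{2n+k+1},c_{2(2n+k)-1}$; then $c_{4k-2},c_{4k-5}$. ($G_1$ is a subgroup of $\mathfrak S_q$ of order $q$ whose non-identity elements have no fixed points.) Every function $\mathbb F_q^2\to\mathbb F_q$ is identified with the unique polynomial in $\mathbb F_q[X,Y]$ of degree $<q$ in each variable representing it. $f$ is a local permutation polynomial (LPP) if $x\mapsto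 f(x,y_0)$ and $y\mapsto f(x_0,y)$ are permutations of $\mathbb F_q$ for all $x_0,y_0$. A permutation polynomial tuple is $(\beta_0,\dots,\beta_{q-1})\in\mathfrak S_q^q$ such that $\beta_i^{-1}\beta_j$ has no fixed point whenever $i\ne j$; LPPs $f$ correspond bijectively to such tuples via $f(x,\beta_i(x))=c_i$ for all $x$ and all $i$. Two LPPs $f,g$ are orthogonal (companions) if for every $(u,v)\in\mathbb F_q^2$ the system $f(X,Y)=u$, $g(X,Y)=v$ has exactly one solution in $\mathbb F_q^2$; a companion of $f$ is an LPP orthogonal to $f$. *)

theory Defs
  imports Main "HOL-Combinatorics.Cycles"
begin

(* Local permutation polynomial: every function F_q^2 -> F_q is identified with its
   reduced polynomial, so we work with the function directly. *)
definition is_LPP :: "('a \<Rightarrow> 'a \<Rightarrow> 'a) \<Rightarrow> bool" where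
  "is_LPP f \<longleftrightarrow> (\<forall>y0. bij (\<lambda>x. f x y0)) \<and> (\<forall>x0. bij (\<lambda>y. f x0 y))"

definition is_ppt :: "nat \<Rightarrow> (nat \<Rightarrow> 'a \<Rightarrow> 'a) \<Rightarrow> bool" where
  "is_ppt q \<beta> \<longleftrightarrow> (\<forall>i<q. bij (\<beta> i)) \<and>
     (\<forall>i<q. \<forall>j<q. i \<noteq> j \<longrightarrow> (\<forall>x. inv (\<beta> i) (\<beta> j x) \<noteq> x))"

definition tuple_of :: "nat \<Rightarrow> (nat \<Rightarrow> 'a) \<Rightarrow> ('a \<Rightarrow> 'a \<Rightarrow> 'a) \<Rightarrow> (nat \<Rightarrow> 'a \<Rightarrow> 'a) \<Rightarrow> bool" where
  "tuple_of q c f \<beta> \<longleftrightarrow> is_ppt q \<beta> \<and> (\<forall>i<q. \<forall>x. f x (\<beta> i x) = c i)"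

definition orthogonal :: "('a \<Rightarrow> 'a \<Rightarrow> 'a) \<Rightarrow> ('a \<Rightarrow> 'a \<Rightarrow> 'a) \<Rightarrow> bool" where
  "orthogonal f g \<longleftrightarrow> (\<forall>u v. \<exists>!(x, y). f x y = u \<and> g x y = v)"

definition has_companion :: "('a \<Rightarrow> 'a \<Rightarrow> 'a) \<Rightarrow> bool" where
  "has_companion f \<longleftrightarrow> (\<exists>g. is_LPP g \<and> orthogonal f g)"

definition perm_a :: "nat \<Rightarrow> (nat \<Rightarrow> 'a) \<Rightarrow> 'a \<Rightarrow> 'a" where
  "perm_a k c = foldr (\<lambda>i p. transpose (c (2*i)) (c (2*i+1)) \<circ> p) [0..<2*k] id"

definition cycle1_idx :: "nat \<Rightarrow> nat list" where
  "cycle1_idx k =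
     concat (map (\<lambda>m. [2*m, 2*(2*m+k-1)]) [0..<k div 2])
   @ concat (map (\<lambda>n. [2*n+k, 2*(2*n+k)]) [0..<(k-2) div 2])
   @ [4*k-1, 4*k-4]"

definition cycle2_idx :: "nat \<Rightarrow> nat list" where
  "cycle2_idx k =
     concat (map (\<lambda>m. [2*m+1, 2*(2*m+k)+1]) [0..<k div 2])
   @ concat (map (\<lambda>n. [2*n+k+1, 2*(2*n+k)-1]) [0..<(k-2) div 2])
   @ [4*k-2, 4*k-5]"

definition perm_b :: "nat \<Rightarrow> (nat \<Rightarrow> 'a) \<Rightarrow> 'a \<Rightarrow> 'a" where
  "perm_b k c = cycle_of_list (map c (cycle1_idx k)) \<circ> cycle_of_list (map c (cycle2_idx k))"

definition G1 :: "nat \<Rightarrow> (nat \<Rightarrow> 'a) \<Rightarrow> ('a \<Rightarrow> 'a) set" where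
  "G1 k c = {(perm_b k c ^^ j) \<circ> (perm_a k c ^^ i) | j i. j \<le> 2*k - 1 \<and> i \<le> 1}"

end

(*
  The two 2k-cycles C_1, C_2 of b partition F_q, so every element c_n gets coordinates
  (e, p) in F_2 x Z/2k: n is the p-th entry of C_1 (e = 0) or of C_2 (e = 1).  In these
  coordinates b is (e, p) |-> (e, p + 1) and a is (e, p) |-> (e + 1, (k + 1) p), so b^j a^i
  acts as (e, p) |-> (e + i, m_i p + j) with m_0 = 1, m_1 = k + 1.  The companion is
  g((e, p), (e', p')) = (e' + A(e, p), p' + m_e' (p + e)) for a suitable bit A: it is a Latin
  square, and x |-> g(x, s x) is injective for every s in G_1.  Since the level sets of f are
  the graphs of the elements of its permutation polynomial tuple G_1, this is orthogonality.
*)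

theory Submission
  imports Defs "HOL-Number_Theory.Cong"
begin

section \<open>Orthogonality along the permutation polynomial tuple\<close>

lemma ppt_transitive:
  assumes "is_ppt q \<beta>" "card (UNIV :: 'a::finite set) = q"
  shows "\<exists>m<q. \<beta> m x = (y :: 'a)"
proof -
  have "inj_on (\<lambda>m. \<beta> m x) {..<q}"
  proof (rule inj_onI)
    fix m m' assume m: "m \<in> {..<q}" "m' \<in> {..<q}" and eq: "\<beta> m x = \<beta> m' x"
    have "inv (\<beta> m) (\<beta> m x) = x" using assms(1) m by (simp add: is_ppt_def bij_is_inj)
    then show "m = m'" using assms(1) m eq unfolding is_ppt_def by (metis lessThan_iff)
  qed
  then have "card ((\<lambda>m. \<beta> m x) ` {..<q}) = card (UNIV :: 'a set)"
    using assms(2) by (simp add: card_image)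
  then have "(\<lambda>m. \<beta> m x) ` {..<q} = UNIV" by (simp add: card_subset_eq)
  then show ?thesis by (metis UNIV_I imageE lessThan_iff)
qed

lemma orthogonal_if_inj_along_tuple:
  fixes f g :: "'a::finite \<Rightarrow> 'a \<Rightarrow> 'a"
  assumes tuple: "tuple_of q c f \<beta>" and c: "bij_betw c {..<q} UNIV"
    and inj: "\<And>n. n < q \<Longrightarrow> inj (\<lambda>x. g x (\<beta> n x))"
  shows "orthogonal f g"
  unfolding orthogonal_def
proof (intro allI)
  fix u v
  have ppt: "is_ppt q \<beta>" and level: "\<And>i x. i < q \<Longrightarrow> f x (\<beta> i x) = c i"
    using tuple by (auto simp: tuple_of_def)
  have card: "card (UNIV :: 'a set) = q" using bij_betw_same_card[OF c] by simp
  have "u \<in> c ` {..<q}" using c by (simp add: bij_betw_def)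
  then obtain n where n: "n < q" "c n = u" by auto
  have level_n: "f x y = u \<longleftrightarrow> y = \<beta> n x" for x y
  proof
    assume "f x y = u"
    obtain m where m: "m < q" "\<beta> m x = y" using ppt_transitive[OF ppt card] by blast
    then have "c m = c n" using level[OF m(1), of x] n \<open>f x y = u\<close> by simp
    then have "m = n" using bij_betw_imp_inj_on[OF c] m(1) n(1) by (simp add: inj_on_eq_iff)
    then show "y = \<beta> n x" using m by simp
  qed (use level[OF n(1)] n in simp)
  have "surj (\<lambda>x. g x (\<beta> n x))" by (rule finite_UNIV_inj_surj[OF _ inj[OF n(1)]]) simp
  then obtain x where x: "g x (\<beta> n x) = v" by (metis surjD)
  show "\<exists>!(x, y). f x y = u \<and> g x y = v"
  proof (rule ex1I[of _ "(x, \<beta> n x)"])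
    show "case (x, \<beta> n x) of (x, y) \<Rightarrow> f x y = u \<and> g x y = v" using level_n x by simp
  next
    fix z assume z: "case z of (x, y) \<Rightarrow> f x y = u \<and> g x y = v"
    obtain x' y' where z': "z = (x', y')" by (cases z)
    then have "f x' y' = u" "g x' y' = v" using z by simp_all
    then have "y' = \<beta> n x'" "g x' (\<beta> n x') = g x (\<beta> n x)" using level_n x by simp_all
    moreover from this(2) have "x' = x" by (rule injD[OF inj[OF n(1)]])
    ultimately show "z = (x, \<beta> n x)" using z' by simp
  qed
qed

section \<open>Transporting an operation along a bijection\<close>

definition transport_op :: "('b \<Rightarrow> 'a) \<Rightarrow> 'b set \<Rightarrow> ('b \<Rightarrow> 'b \<Rightarrow> 'b) \<Rightarrow> 'a \<Rightarrow> 'a \<Rightarrow> 'a" where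
  "transport_op R D G x y = R (G (inv_into D R x) (inv_into D R y))"

lemma transport_op_apply:
  assumes "bij_betw R D UNIV" "X \<in> D" "Y \<in> D"
  shows "transport_op R D G (R X) (R Y) = R (G X Y)"
  using assms by (simp add: transport_op_def bij_betw_inv_into_left)

lemma bij_betw_UNIV_obtain:
  assumes "bij_betw R D UNIV"
  obtains X where "X \<in> D" "x = R X"
  using assms unfolding bij_betw_def by blast

lemma inj_transport_op:
  assumes R: "bij_betw R D UNIV" and closed: "\<And>X Y. X \<in> D \<Longrightarrow> Y \<in> D \<Longrightarrow> G X Y \<in> D"
    and U: "\<And>X. X \<in> D \<Longrightarrow> U X \<in> D \<and> u (R X) = R (U X)"
    and V: "\<And>X. X \<in> D \<Longrightarrow> V X \<in> D \<and> v (R X) = R (V X)"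
    and inj: "inj_on (\<lambda>X. G (U X) (V X)) D"
  shows "inj (\<lambda>x. transport_op R D G (u x) (v x))"
proof (rule injI)
  fix x y assume eq: "transport_op R D G (u x) (v x) = transport_op R D G (u y) (v y)"
  obtain X Y where X: "X \<in> D" "x = R X" and Y: "Y \<in> D" "y = R Y"
    using bij_betw_UNIV_obtain[OF R] by metis
  have "R (G (U X) (V X)) = R (G (U Y) (V Y))"
    using eq X Y U V transport_op_apply[OF R] by simp
  then have "G (U X) (V X) = G (U Y) (V Y)"
    using inj_onD[OF bij_betw_imp_inj_on[OF R]] closed U V X(1) Y(1) by blast
  then show "x = y" using inj_onD[OF inj] X Y by blast
qed

lemma is_LPP_transport_op:
  fixes R :: "'b \<Rightarrow> 'a::finite"
  assumes R: "bij_betw R D UNIV" and closed: "\<And>X Y. X \<in> D \<Longrightarrow> Y \<in> D \<Longrightarrow> G X Y \<in> D"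
    and inj_left: "\<And>Y. Y \<in> D \<Longrightarrow> inj_on (\<lambda>X. G X Y) D"
    and inj_right: "\<And>X. X \<in> D \<Longrightarrow> inj_on (G X) D"
  shows "is_LPP (transport_op R D G)"
  unfolding is_LPP_def
proof (intro allI conjI)
  fix y0
  obtain Y where Y: "Y \<in> D" "y0 = R Y" using bij_betw_UNIV_obtain[OF R] by metis
  have "inj (\<lambda>x. transport_op R D G (id x) ((\<lambda>_. y0) x))"
    by (rule inj_transport_op[OF R closed]) (use Y inj_left[OF Y(1)] in auto)
  then show "bij (\<lambda>x. transport_op R D G x y0)" by (simp add: bij_def finite_UNIV_inj_surj)
next
  fix x0
  obtain X where X: "X \<in> D" "x0 = R X" using bij_betw_UNIV_obtain[OF R] by metis
  have "inj (\<lambda>y. transport_op R D G ((\<lambda>_. x0) y) (id y))"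
    by (rule inj_transport_op[OF R closed]) (use X inj_right[OF X(1)] in auto)
  then show "bij (\<lambda>y. transport_op R D G x0 y)" by (simp add: bij_def finite_UNIV_inj_surj)
qed

section \<open>The entries of the cycles of b\<close>

definition shift_odd :: "nat \<Rightarrow> nat \<Rightarrow> nat" where
  "shift_odd k p = (if even p then p else (p + k) mod (2*k))"

definition cycle_pair :: "nat \<Rightarrow> nat \<Rightarrow> nat" where
  "cycle_pair k p =
     (if even p \<and> p < 2*k - 2 then p div 2
      else if p < k then p + k - 2
      else if p < 2*k - 2 then p - 1
      else if p = 2*k - 2 then 2*k - 1
      else 2*k - 2)"

text \<open>cycle_entry k False p and cycle_entry k True p are the indices of the p-th entries of
  C_1 and C_2.  They are written as 2 * pair index + bit because a swaps c_(2w) and c_(2w+1):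
  the entries of C_2 are the a-partners of those of C_1, reindexed by shift_odd.\<close>

definition cycle_entry :: "nat \<Rightarrow> bool \<Rightarrow> nat \<Rightarrow> nat" where
  "cycle_entry k e p =
     2 * cycle_pair k (if e then shift_odd k p else p) + of_bool (e \<noteq> (p = 2*k - 2))"

lemma shift_odd_less: "0 < k \<Longrightarrow> p < 2*k \<Longrightarrow> shift_odd k p < 2*k"
  by (simp add: shift_odd_def)

lemma shift_odd_shift_odd:
  assumes "even k" "p < 2*k" shows "shift_odd k (shift_odd k p) = p"
  using assms by (cases "even p"; cases "p < k") (simp_all add: shift_odd_def le_mod_geq)

lemma even_shift_odd_iff: "even k \<Longrightarrow> even (shift_odd k p) \<longleftrightarrow> even p"
  by (simp add: shift_odd_def dvd_mod_iff)

lemma shift_odd_eq_iff_last: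
  assumes "even k"
  shows "shift_odd k p = 2*k - 2 \<longleftrightarrow> p = 2*k - 2"
proof (cases "even p")
  case False
  moreover have "even (2*k - 2)" by simp
  ultimately show ?thesis using even_shift_odd_iff[OF assms] by metis
qed (simp add: shift_odd_def)

lemma cycle_pair_less: "0 < k \<Longrightarrow> p < 2*k \<Longrightarrow> cycle_pair k p < 2*k"
  by (auto simp: cycle_pair_def)

lemma cycle_pair_inj:
  assumes "even k" "p < 2*k" "p' < 2*k" "cycle_pair k p = cycle_pair k p'"
  shows "p = p'"
proof -
  obtain h where k: "k = 2*h + 2"
    using assms(1,2) by (metis evenE less_nat_zero_code mult_0_right not0_implies_Suc mult_Suc_right add.commute)
  show ?thesis
    using assms(2-) unfolding cycle_pair_def k
    by (auto split: if_splits elim!: oddE evenE) (metis Suc_double_not_eq_double distrib_left)+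
qed

lemma double_plus_bit_inj:
  "2 * a + of_bool b = 2 * (a'::nat) + of_bool b' \<Longrightarrow> a = a' \<and> b = b'"
  by (cases b; cases b') (auto simp: Suc_double_not_eq_double double_not_eq_Suc_double)

lemma double_plus_bit_less: "a < (n::nat) \<Longrightarrow> 2 * a + of_bool b < 2 * n"
  by (cases b) auto

lemma cycle_entry_less:
  assumes "0 < k" "p < 2*k" shows "cycle_entry k e p < 4*k"
proof -
  have "cycle_pair k (if e then shift_odd k p else p) < 2*k"
    using assms by (simp add: cycle_pair_less shift_odd_less)
  then show ?thesis unfolding cycle_entry_def using double_plus_bit_less by fastforce
qed

lemma cycle_entry_inj:
  assumes "even k" "0 < k" "p < 2*k" "p' < 2*k" "cycle_entry k e p = cycle_entry k e' p'"
  shows "e = e' \<and> p = p'"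
proof -
  let ?s = "\<lambda>e p. if e then shift_odd k p else p"
  have "cycle_pair k (?s e p) = cycle_pair k (?s e' p')"
    and bit: "(e \<noteq> (p = 2*k - 2)) = (e' \<noteq> (p' = 2*k - 2))"
    using double_plus_bit_inj[OF assms(5)[unfolded cycle_entry_def]] by simp_all
  then have s: "?s e p = ?s e' p'"
    using cycle_pair_inj[OF assms(1)] assms(2-4) by (simp add: shift_odd_less split: if_splits)
  show ?thesis
  proof (cases "e = e'")
    case True
    then show ?thesis using s shift_odd_shift_odd[OF assms(1)] assms(3,4) by metis
  next
    case False
    then have "(p = 2*k - 2) = (p' = 2*k - 2)"
      using s shift_odd_eq_iff_last[OF assms(1)] by (cases e) auto
    then show ?thesis using bit False by blast
  qed
qed

definition pair_partner :: "nat \<Rightarrow> nat" where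
  "pair_partner n = (if even n then n + 1 else n - 1)"

lemma pair_partner_double_plus_bit: "pair_partner (2 * a + of_bool b) = 2 * a + of_bool (\<not> b)"
  by (cases b) (simp_all add: pair_partner_def)

lemma pair_partner_div2: "pair_partner n div 2 = n div 2"
  by (simp add: pair_partner_def) presburger

lemma pair_partner_cycle_entry:
  assumes "even k" "p < 2*k"
  shows "pair_partner (cycle_entry k e p) = cycle_entry k (\<not> e) (shift_odd k p)"
  using assms shift_odd_shift_odd[OF assms] shift_odd_eq_iff_last[OF assms(1), of p]
  by (cases e) (simp_all add: cycle_entry_def pair_partner_double_plus_bit)

lemma concat_map_pairs:
  "concat (map (\<lambda>m. [u m, v m]) [0..<n]) = map (\<lambda>p. if even p then u (p div 2) else v (p div 2)) [0..<2*n]"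
proof (induction n)
  case (Suc n)
  have "[0..<2 * Suc n] = [0..<2*n] @ [2*n, 2*n + 1]" by simp
  then show ?case using Suc by simp
qed simp

lemma upt_double_split:
  assumes "2 \<le> k"
  shows "[0..<2*k] = [0..<k] @ map (\<lambda>p. p + k) [0..<k - 2] @ [2*k - 2, 2*k - 1]"
proof -
  obtain m where k: "k = m + 2" using assms le_Suc_ex by (metis add.commute)
  have "[0..<2*k] = [0..<k + m] @ [k + m, k + m + 1]" by (simp add: k mult_2)
  also have "[0..<k + m] = [0..<k] @ [k..<k + m]" by (rule upt_add_eq_append) simp
  also have "[k..<k + m] = map (\<lambda>p. p + k) [0..<k - 2]"
    using map_add_upt[of k m] by (simp only: k diff_add_inverse2 add.commute)
  finally show ?thesis by (simp add: k)
qed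

lemma cycle_entry_False_low:
  assumes "even k" "0 < k" "p < k"
  shows "cycle_entry k False p = (if even p then p else 2*p + 2*k - 4)"
proof -
  have "p < 2*k - 2" "p \<noteq> 2*k - 2" using assms by presburger+
  then show ?thesis unfolding cycle_entry_def cycle_pair_def using assms(3) by (simp add: diff_mult_distrib2)
qed

lemma cycle_entry_False_high:
  assumes "even k" "p < k - 2"
  shows "cycle_entry k False (p + k) = (if even p then p + k else 2*p + 2*k - 2)"
proof -
  have "p + k < 2*k - 2" "p + k \<noteq> 2*k - 2" using assms by presburger+
  then show ?thesis unfolding cycle_entry_def cycle_pair_def using assms(1)
    by (simp add: diff_mult_distrib2)
qed

lemma cycle_entry_False_last:
  assumes "even k" "0 < k"
  shows "cycle_entry k False (2*k - 2) = 4*k - 1" "cycle_entry k False (2*k - 1) = 4*k - 4"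
proof -
  have "\<not> 2*k - 2 < k" "\<not> 2*k - 1 < k" "2*k - 1 \<noteq> 2*k - 2" using assms by presburger+
  then show "cycle_entry k False (2*k - 2) = 4*k - 1" "cycle_entry k False (2*k - 1) = 4*k - 4"
    unfolding cycle_entry_def cycle_pair_def using assms(2) by (simp_all add: diff_mult_distrib2)
qed

lemma cycle_entry_True_low:
  assumes "even k" "0 < k" "p < k"
  shows "cycle_entry k True p = (if even p then p + 1 else 2*p + 2*k - 1)"
proof (cases "even p")
  case True
  have "p < 2*k - 2" "p \<noteq> 2*k - 2" using assms by presburger+
  then show ?thesis unfolding cycle_entry_def cycle_pair_def shift_odd_def using True by simp
next
  case False
  have "p + k < 2*k" "p \<noteq> 2*k - 2" "odd (p + k)" "p + k < 2*k - 2 \<or> p = k - 1" "p + k \<noteq> 2*k - 2"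
    using assms False by presburger+
  then show ?thesis unfolding cycle_entry_def cycle_pair_def shift_odd_def using False
    by (auto simp add: diff_mult_distrib2)
qed

lemma cycle_entry_True_high:
  assumes "even k" "p < k - 2"
  shows "cycle_entry k True (p + k) = (if even p then p + k + 1 else 2*p + 2*k - 3)"
proof (cases "even p")
  case True
  have "p + k < 2*k - 2" "p + k \<noteq> 2*k - 2" using assms by presburger+
  then show ?thesis unfolding cycle_entry_def cycle_pair_def shift_odd_def using True assms(1) by simp
next
  case False
  have "(p + k + k) mod (2*k) = p" "p < k" "p + k \<noteq> 2*k - 2" "2*p + 2*k \<ge> 4"
    using assms False by (auto elim: oddE)
  then show ?thesis unfolding cycle_entry_def cycle_pair_def shift_odd_def using False assms(1)
    by (simp add: diff_mult_distrib2)
qed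

lemma cycle_entry_True_last:
  assumes "even k" "0 < k"
  shows "cycle_entry k True (2*k - 2) = 4*k - 2" "cycle_entry k True (2*k - 1) = 4*k - 5"
proof -
  have "(2*k - 1 + k) mod (2*k) = k - 1" "k - 1 < 2*k - 2" "odd (k - 1)" "\<not> 2*k - 2 < k" "2*k - 1 \<noteq> 2*k - 2"
    using assms by (auto simp: le_mod_geq) presburger
  then show "cycle_entry k True (2*k - 2) = 4*k - 2" "cycle_entry k True (2*k - 1) = 4*k - 5"
    unfolding cycle_entry_def cycle_pair_def shift_odd_def using assms by (simp_all add: diff_mult_distrib2)
qed

lemma cycle1_idx_eq:
  assumes "even k" "0 < k"
  shows "cycle1_idx k = map (cycle_entry k False) [0..<2*k]"
proof -
  have k: "2 \<le> k" "2 * (k div 2) = k" "2 * ((k - 2) div 2) = k - 2" using assms by presburger+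
  show ?thesis
    unfolding cycle1_idx_def concat_map_pairs upt_double_split[OF k(1)] k(2,3)
    using cycle_entry_False_low[OF assms] cycle_entry_False_high[OF assms(1)] cycle_entry_False_last[OF assms]
    by (auto intro!: map_cong simp: diff_mult_distrib2 elim!: oddE)
qed

lemma cycle2_idx_eq:
  assumes "even k" "0 < k"
  shows "cycle2_idx k = map (cycle_entry k True) [0..<2*k]"
proof -
  have k: "2 \<le> k" "2 * (k div 2) = k" "2 * ((k - 2) div 2) = k - 2" using assms by presburger+
  show ?thesis
    unfolding cycle2_idx_def concat_map_pairs upt_double_split[OF k(1)] k(2,3)
    using cycle_entry_True_low[OF assms] cycle_entry_True_high[OF assms(1)] cycle_entry_True_last[OF assms]
    by (auto intro!: map_cong simp: diff_mult_distrib2 elim!: oddE)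
qed

section \<open>The action of G_1 in cycle coordinates\<close>

lemma foldr_comp_id: "foldr (\<lambda>i g. t i \<circ> g) xs h = foldr (\<lambda>i g. t i \<circ> g) xs id \<circ> h"
  by (induction xs) (simp_all add: comp_assoc)

lemma foldr_transpose_pairs_apply:
  assumes "inj_on c {..<2*M}" "N \<le> M" "n < 2*M"
  shows "foldr (\<lambda>i g. transpose (c (2*i)) (c (2*i+1)) \<circ> g) [0..<N] id (c n)
           = c (if n < 2*N then pair_partner n else n)"
proof -
  define t where "t i = transpose (c (2*i)) (c (2*i+1))" for i
  define F where "F N = foldr (\<lambda>i g. t i \<circ> g) [0..<N] id" for N
  have "F N (c n) = c (if n < 2*N then pair_partner n else n)"
    using assms(2,3)
  proof (induction N arbitrary: n)
    case (Suc N)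
    have step: "F (Suc N) x = F N (t N x)" for x
      using foldr_comp_id[of t "[0..<N]" "t N"] by (simp add: F_def)
    show ?case
    proof (cases "n div 2 = N")
      case True
      then have "n = 2*N \<or> n = 2*N + 1" by presburger
      then have "t N (c n) = c (pair_partner n)" by (auto simp: t_def pair_partner_def)
      moreover have "pair_partner n < 2*M" "\<not> pair_partner n < 2*N"
        using True Suc.prems pair_partner_div2[of n] by presburger+
      ultimately show ?thesis using Suc.IH[of "pair_partner n"] Suc.prems True step by auto
    next
      case False
      then have "n \<noteq> 2*N" "n \<noteq> 2*N + 1" "2*N + 1 < 2*M" using Suc.prems by auto
      then have "c n \<noteq> c (2*N)" "c n \<noteq> c (2*N + 1)"
        using inj_on_eq_iff[OF assms(1)] Suc.prems by simp_all
      then have "t N (c n) = c n" by (simp add: t_def transpose_apply_other)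
      moreover have "n < 2*N \<longleftrightarrow> n < 2 * Suc N" using False by presburger
      ultimately show ?thesis using Suc.IH[of n] Suc.prems step by auto
    qed
  qed (simp add: F_def)
  then show ?thesis by (simp add: F_def t_def)
qed

lemma perm_a_apply:
  assumes "inj_on c {..<4*k}" "n < 4*k"
  shows "perm_a k c (c n) = c (pair_partner n)"
  using foldr_transpose_pairs_apply[of c "2*k" "2*k" n] assms unfolding perm_a_def by simp

definition cycle_point :: "nat \<Rightarrow> (nat \<Rightarrow> 'a) \<Rightarrow> bool \<times> nat \<Rightarrow> 'a" where
  "cycle_point k c X = c (cycle_entry k (fst X) (snd X))"

lemma inj_on_cycle_point:
  assumes "even k" "0 < k" "inj_on c {..<4*k}"
  shows "inj_on (cycle_point k c) (UNIV \<times> {..<2*k})"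
proof (rule inj_onI)
  fix X Y assume XY: "X \<in> UNIV \<times> {..<2*k}" "Y \<in> UNIV \<times> {..<2*k}" "cycle_point k c X = cycle_point k c Y"
  obtain e p e' p' where X: "X = (e, p)" and Y: "Y = (e', p')" by (cases X, cases Y)
  then have "p < 2*k" "p' < 2*k" using XY(1,2) by auto
  moreover from this have "cycle_entry k e p = cycle_entry k e' p'"
    using XY(3) inj_on_eq_iff[OF assms(3)] cycle_entry_less[OF assms(2)] by (simp add: X Y cycle_point_def)
  ultimately show "X = Y" using cycle_entry_inj[OF assms(1,2)] X Y by simp
qed

lemma bij_betw_cycle_point:
  fixes c :: "nat \<Rightarrow> 'a::finite"
  assumes "even k" "0 < k" "bij_betw c {..<4*k} UNIV"
  shows "bij_betw (cycle_point k c) (UNIV \<times> {..<2*k}) UNIV"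
proof -
  have inj: "inj_on (cycle_point k c) (UNIV \<times> {..<2*k})"
    using inj_on_cycle_point[OF assms(1,2) bij_betw_imp_inj_on[OF assms(3)]] .
  have "card (cycle_point k c ` (UNIV \<times> {..<2*k})) = card (UNIV :: 'a set)"
    using card_image[OF inj] bij_betw_same_card[OF assms(3)] by (simp add: card_cartesian_product)
  then have "cycle_point k c ` (UNIV \<times> {..<2*k}) = UNIV" by (simp add: card_subset_eq)
  with inj show ?thesis by (simp add: bij_betw_def)
qed

lemma perm_a_cycle_point:
  assumes "even k" "0 < k" "inj_on c {..<4*k}" "p < 2*k"
  shows "perm_a k c (cycle_point k c (e, p)) = cycle_point k c (\<not> e, shift_odd k p)"
  using perm_a_apply[OF assms(3) cycle_entry_less[OF assms(2,4)]] pair_partner_cycle_entry[OF assms(1,4)]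
  by (simp add: cycle_point_def)

lemma cycle_of_list_map_upt:
  assumes "inj_on \<phi> {..<n}" "p < n"
  shows "cycle_of_list (map \<phi> [0..<n]) (\<phi> p) = \<phi> (Suc p mod n)"
proof -
  let ?cs = "map \<phi> [0..<n]"
  have "cycle ?cs" using assms(1) by (simp add: distinct_map atLeast0LessThan)
  then have "map (cycle_of_list ?cs ^^ 1) ?cs = rotate 1 ?cs" by (rule cyclic_rotation)
  then have "map (cycle_of_list ?cs) ?cs ! p = rotate1 ?cs ! p" by simp
  then show ?thesis using assms(2) by (simp add: nth_rotate1)
qed

lemma perm_b_cycle_point:
  assumes "even k" "0 < k" "inj_on c {..<4*k}" "p < 2*k"
  shows "perm_b k c (cycle_point k c (e, p)) = cycle_point k c (e, Suc p mod (2*k))"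
proof -
  let ?pt = "\<lambda>e p. cycle_point k c (e, p)"
  have inj: "inj_on (cycle_point k c) (UNIV \<times> {..<2*k})" by (rule inj_on_cycle_point[OF assms(1-3)])
  have cycle: "map c (cycle1_idx k) = map (?pt False) [0..<2*k]" "map c (cycle2_idx k) = map (?pt True) [0..<2*k]"
    by (simp_all add: cycle1_idx_eq[OF assms(1,2)] cycle2_idx_eq[OF assms(1,2)] cycle_point_def)
  have inj_e: "inj_on (?pt e) {..<2*k}" for e using inj by (auto simp: inj_on_def)
  have apply_e: "cycle_of_list (map (?pt e) [0..<2*k]) (?pt e p) = ?pt e (Suc p mod (2*k))"
    by (rule cycle_of_list_map_upt[OF inj_e assms(4)])
  have other: "cycle_of_list (map (?pt (\<not> e)) [0..<2*k]) (?pt e q) = ?pt e q" if "q < 2*k" for q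
  proof (rule id_outside_supp)
    show "?pt e q \<notin> set (map (?pt (\<not> e)) [0..<2*k])"
    proof
      assume "?pt e q \<in> set (map (?pt (\<not> e)) [0..<2*k])"
      then obtain x where "x < 2*k" "?pt e q = ?pt (\<not> e) x" by auto
      then have "(e, q) = (\<not> e, x)" using inj_onD[OF inj] that by blast
      then show False by simp
    qed
  qed
  have "Suc p mod (2*k) < 2*k" using assms(2) by simp
  then show ?thesis unfolding perm_b_def cycle
    using apply_e other[OF assms(4)] other[of "Suc p mod (2*k)"] by (cases e) simp_all
qed

lemma funpow_perm_b_cycle_point:
  assumes "even k" "0 < k" "inj_on c {..<4*k}" "p < 2*k"
  shows "(perm_b k c ^^ j) (cycle_point k c (e, p)) = cycle_point k c (e, (p + j) mod (2*k))"
proof (induction j)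
  case (Suc j)
  have "(p + j) mod (2*k) < 2*k" using assms(2) by simp
  then show ?case using Suc perm_b_cycle_point[OF assms(1-3)] by (simp add: mod_Suc_eq)
qed (use assms(4) in simp)

lemma shift_odd_eq_mod:
  assumes "even k" "p < 2*k"
  shows "shift_odd k p = ((k + 1) * p) mod (2*k)"
proof (cases "even p")
  case True
  then have "(k + 1) * p = p + (2*k) * (p div 2)" by (simp add: algebra_simps)
  then have "((k + 1) * p) mod (2*k) = p" using assms(2) by (simp only: mod_mult_self2) simp
  then show ?thesis using True by (simp add: shift_odd_def)
next
  case False
  then have "(k + 1) * p = (p + k) + (2*k) * (p div 2)"
    using assms(1) by (auto simp: algebra_simps elim!: oddE evenE)
  then have "((k + 1) * p) mod (2*k) = (p + k) mod (2*k)" by (simp only: mod_mult_self2)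
  then show ?thesis using False by (simp add: shift_odd_def)
qed

definition slope :: "nat \<Rightarrow> bool \<Rightarrow> nat" where
  "slope k e = (if e then k + 1 else 1)"

lemma odd_slope: "even k \<Longrightarrow> odd (slope k e)"
  by (simp add: slope_def)

lemma coprime_slope: "even k \<Longrightarrow> coprime (slope k e) (2*k)"
  by (simp add: slope_def coprime_mult_right_iff coprime_right_2_iff_odd)

definition coord_action :: "nat \<Rightarrow> bool \<Rightarrow> nat \<Rightarrow> bool \<times> nat \<Rightarrow> bool \<times> nat" where
  "coord_action k i j X = (fst X \<noteq> i, (slope k i * snd X + j) mod (2*k))"

lemma coord_action_mem: "0 < k \<Longrightarrow> coord_action k i j X \<in> UNIV \<times> {..<2*k}"
  by (simp add: coord_action_def)

lemma G1_acts_on_cycle_points: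
  assumes "even k" "0 < k" "inj_on c {..<4*k}" "s \<in> G1 k c"
  obtains i j where
    "\<And>X. X \<in> UNIV \<times> {..<2*k} \<Longrightarrow> s (cycle_point k c X) = cycle_point k c (coord_action k i j X)"
proof -
  obtain j i where s: "s = (perm_b k c ^^ j) \<circ> (perm_a k c ^^ i)" "i \<le> 1"
    using assms(4) unfolding G1_def by blast
  have "s (cycle_point k c (e, p)) = cycle_point k c (coord_action k (i = 1) j (e, p))"
    if "p < 2*k" for e p
  proof (cases "i = 1")
    case True
    have "shift_odd k p < 2*k" using shift_odd_less[OF assms(2) that] .
    then show ?thesis
      using s True perm_a_cycle_point[OF assms(1-3) that] funpow_perm_b_cycle_point[OF assms(1-3)]
        shift_odd_eq_mod[OF assms(1) that]
      by (simp add: coord_action_def slope_def mod_add_left_eq)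
  next
    case False
    then have "i = 0" using s(2) by simp
    then show ?thesis
      using s funpow_perm_b_cycle_point[OF assms(1-3) that] by (simp add: coord_action_def slope_def)
  qed
  then show ?thesis using that by auto
qed

section \<open>The companion in cycle coordinates\<close>

text \<open>companion_bit k True p = \<not> companion_bit k False (Suc p mod 2k): this is what
  left injectivity needs when p + of_bool e collide for different e.\<close>

definition companion_bit :: "nat \<Rightarrow> bool \<Rightarrow> nat \<Rightarrow> bool" where
  "companion_bit k e p = (if e then Suc p mod (2*k) < k else k \<le> p)"

definition companion_coord :: "nat \<Rightarrow> bool \<times> nat \<Rightarrow> bool \<times> nat \<Rightarrow> bool \<times> nat" where
  "companion_coord k X Y =
     (fst Y \<noteq> companion_bit k (fst X) (snd X),
      (snd Y + slope k (fst Y) * (snd X + of_bool (fst X))) mod (2*k))"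

lemma companion_coord_mem:
  "0 < k \<Longrightarrow> companion_coord k X Y \<in> UNIV \<times> {..<2*k}"
  by (simp add: companion_coord_def)

lemma inj_on_companion_coord_right:
  "inj_on (companion_coord k X) (UNIV \<times> {..<2*k})"
proof (rule inj_onI)
  fix Y Y' assume Y: "Y \<in> UNIV \<times> {..<2*k}" "Y' \<in> UNIV \<times> {..<2*k}"
    and eq: "companion_coord k X Y = companion_coord k X Y'"
  then have e: "fst Y = fst Y'" unfolding companion_coord_def by (simp only: prod.inject) blast
  with eq have "[snd Y = snd Y'] (mod 2*k)"
    by (simp add: companion_coord_def cong_def[symmetric] cong_add_rcancel_nat)
  then have "snd Y = snd Y'" using Y by (auto intro: cong_less_modulus_unique_nat)
  with e show "Y = Y'" by (simp add: prod_eq_iff)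
qed

lemma inj_on_companion_coord_left:
  assumes "even k"
  shows "inj_on (\<lambda>X. companion_coord k X Y) (UNIV \<times> {..<2*k})"
proof (rule inj_onI)
  fix X X' assume "X \<in> UNIV \<times> {..<2*k}" "X' \<in> UNIV \<times> {..<2*k}"
    and eq: "companion_coord k X Y = companion_coord k X' Y"
  then obtain e p e' p' where X: "X = (e, p)" "p < 2*k" and X': "X' = (e', p')" "p' < 2*k" by auto
  have bit: "companion_bit k e p = companion_bit k e' p'"
    using eq unfolding companion_coord_def X X' by (simp only: prod.inject fst_conv snd_conv) blast
  have "[slope k (fst Y) * (p + of_bool e) = slope k (fst Y) * (p' + of_bool e')] (mod 2*k)"
    using eq by (simp add: companion_coord_def X X' cong_def[symmetric] cong_add_lcancel_nat)
  then have cong: "[p + of_bool e = p' + of_bool e'] (mod 2*k)"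
    using coprime_slope[OF assms] by (simp add: cong_mult_lcancel_nat)
  have "e = e'"
  proof (rule ccontr)
    assume "e \<noteq> e'"
    then consider "e" "\<not> e'" "[Suc p = p'] (mod 2*k)" | "\<not> e" "e'" "[Suc p' = p] (mod 2*k)"
      using cong by (cases e) (auto simp: cong_sym_eq)
    then show False
      using bit X(2) X'(2) by cases (auto simp: companion_bit_def cong_def)
  qed
  then show "X = X'"
    using cong X X' by (auto simp: cong_add_rcancel_nat intro: cong_less_modulus_unique_nat)
qed

lemma companion_bit_add_half:
  assumes "0 < k" "p + k < 2*k"
  shows "companion_bit k e (p + k) \<noteq> companion_bit k e p"
proof (cases "Suc p < k")
  case False
  then have "Suc p = k" using assms(2) by simp
  then show ?thesis using assms by (auto simp: companion_bit_def mult_2)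
qed (use assms in \<open>auto simp: companion_bit_def\<close>)

lemma coprime_half_slope_sum:
  assumes "4 dvd k"
  shows "coprime ((slope k a + slope k b) div 2) k"
proof -
  obtain h where k: "k = 4*h" using assms by blast
  have "coprime (2*h + 1) 2" "coprime (2*h + 1) (2*h)"
    using coprime_Suc_left_nat[of "2*h"] by (simp_all add: coprime_right_2_iff_odd)
  then have "coprime (2*h + 1) (2 * (2*h))" by (rule coprime_mult_right_iff[THEN iffD2, OF conjI])
  moreover have "k div 2 + 1 = 2*h + 1" "k = 2 * (2*h)" using k by simp_all
  ultimately have "coprime (k div 2 + 1) k" by metis
  moreover have "coprime (k + 1) k" by simp
  moreover have "(slope k a + slope k b) div 2 \<in> {1, k div 2 + 1, k + 1}"
    by (cases a; cases b) (simp_all add: slope_def k)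
  ultimately show ?thesis by auto
qed

lemma cong_half_modulus_cases:
  fixes p p' k :: nat
  assumes "[p = p'] (mod k)" "p < 2*k" "p' < 2*k"
  shows "p = p' \<or> p = p' + k \<or> p' = p + k"
proof -
  define r a a' where "r = p mod k" and "a = p div k" and "a' = p' div k"
  have "a < 2" "a' < 2"
    using less_mult_imp_div_less[of p 2 k] less_mult_imp_div_less[of p' 2 k] assms(2,3)
    by (simp_all add: a_def a'_def)
  moreover have "p = r + k * a" by (simp add: r_def a_def)
  moreover have "p' = r + k * a'" using assms(1) by (simp add: r_def a'_def cong_def)
  ultimately show ?thesis by (auto simp: less_2_cases_iff)
qed

text \<open>Along the graph of (e, p) \<mapsto> (e + i, m_i p + j) the second coordinate of the
  companion is (m_i + m_(e+i)) p + const.  For equal e, m_i + m_(e+i) \<in> {2, k + 2, 2k + 2} is twice a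
  unit mod k, so p is determined up to adding k, which companion_bit detects; for different e
  the parities differ.\<close>

lemma inj_on_companion_coord_graph:
  assumes "4 dvd k" "0 < k"
  shows "inj_on (\<lambda>X. companion_coord k X (coord_action k i j X)) (UNIV \<times> {..<2*k})"
proof (rule inj_onI)
  have k: "even k" "0 < k" using assms by auto
  fix X X' assume "X \<in> UNIV \<times> {..<2*k}" "X' \<in> UNIV \<times> {..<2*k}"
    and eq: "companion_coord k X (coord_action k i j X) = companion_coord k X' (coord_action k i j X')"
  then obtain e p e' p' where X: "X = (e, p)" "p < 2*k" and X': "X' = (e', p')" "p' < 2*k" by auto
  define T where "T e p = slope k i * p + j + slope k (e \<noteq> i) * (p + of_bool e)" for e p
  have bits: "((e \<noteq> i) \<noteq> companion_bit k e p) \<longleftrightarrow> ((e' \<noteq> i) \<noteq> companion_bit k e' p')"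
    using eq by (simp add: companion_coord_def coord_action_def X X')
  have "[T e p = T e' p'] (mod 2*k)"
    using eq by (simp add: companion_coord_def coord_action_def X X' T_def cong_def mod_add_left_eq)
  show "X = X'"
  proof (cases "e = e'")
    case True
    define d where "d = (slope k i + slope k (e \<noteq> i)) div 2"
    have "even (slope k i + slope k (e \<noteq> i))" using odd_slope[OF k(1)] by simp
    then have d: "slope k i + slope k (e \<noteq> i) = 2 * d" unfolding d_def by simp
    have "T e q = 2 * d * q + (j + slope k (e \<noteq> i) * of_bool e)" for q
      unfolding T_def d[symmetric] by (simp add: algebra_simps)
    then have "[2 * d * p = 2 * d * p'] (mod 2*k)"
      using \<open>[T e p = T e' p'] (mod 2*k)\<close> True by (simp add: cong_add_rcancel_nat)
    then have "[d * p = d * p'] (mod k)"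
      by (simp add: cong_def mult.assoc mod_mult_mult1)
    then have "[p = p'] (mod k)"
      using coprime_half_slope_sum[OF assms(1)] by (simp add: d_def cong_mult_lcancel_nat)
    then have "p = p' \<or> p = p' + k \<or> p' = p + k" using cong_half_modulus_cases X(2) X'(2) by blast
    moreover have "companion_bit k e p = companion_bit k e p'" using bits True by blast
    ultimately have "p = p'"
      using X(2) X'(2) companion_bit_add_half[OF k(2), of p' e] companion_bit_add_half[OF k(2), of p e]
      by auto
    then show ?thesis using X X' True by simp
  next
    case False
    have "[T e p = T e' p'] (mod 2)"
      using \<open>[T e p = T e' p'] (mod 2*k)\<close> by (rule cong_modulus_mult_nat)
    moreover have "even (T e p) \<longleftrightarrow> even (j + of_bool e)" for e p
      by (simp add: T_def odd_slope[OF k(1)]) blast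
    ultimately have "even (j + of_bool e) \<longleftrightarrow> even (j + of_bool e')"
      by (metis cong_def even_mod_2_iff)
    then show ?thesis using False by (cases e) auto
  qed
qed

lemma LPP_inj_along_G1:
  fixes c :: "nat \<Rightarrow> 'a::finite"
  assumes "4 dvd k" "0 < k" "bij_betw c {..<4*k} UNIV"
  obtains g where "is_LPP g" "\<And>s. s \<in> G1 k c \<Longrightarrow> inj (\<lambda>x. g x (s x))"
proof
  let ?D = "UNIV \<times> {..<2*k}" and ?R = "cycle_point k c"
  have k: "even k" using assms(1) by auto
  have R: "bij_betw ?R ?D UNIV" by (rule bij_betw_cycle_point[OF k assms(2,3)])
  have closed: "companion_coord k X Y \<in> ?D" for X Y by (rule companion_coord_mem[OF assms(2)])
  show "is_LPP (transport_op ?R ?D (companion_coord k))"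
    by (rule is_LPP_transport_op[OF R closed inj_on_companion_coord_left[OF k]
          inj_on_companion_coord_right])
  fix s assume "s \<in> G1 k c"
  then obtain i j where act: "\<And>X. X \<in> ?D \<Longrightarrow> s (?R X) = ?R (coord_action k i j X)"
    using G1_acts_on_cycle_points[OF k assms(2) bij_betw_imp_inj_on[OF assms(3)]] by metis
  have "inj (\<lambda>x. transport_op ?R ?D (companion_coord k) (id x) (s x))"
    by (rule inj_transport_op[where U = id and V = "coord_action k i j", OF R closed])
      (use act coord_action_mem[OF assms(2)] inj_on_companion_coord_graph[OF assms(1,2)] in auto)
  then show "inj (\<lambda>x. transport_op ?R ?D (companion_coord k) x (s x))" by simp
qed

theorem theorem4p8:
  fixes f :: "'a::{field,finite} \<Rightarrow> 'a \<Rightarrow> 'a"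
    and c :: "nat \<Rightarrow> 'a"
    and k l q :: nat
  assumes "l \<ge> 2" and "k = 2 ^ l" and "q = 4 * k"
    and "card (UNIV :: 'a set) = q"
    and "bij_betw c {..<q} (UNIV :: 'a set)"
    and "is_LPP f"
    and "\<exists>\<beta>. tuple_of q c f \<beta> \<and> bij_betw \<beta> {..<q} (G1 k c)"
  shows "has_companion f"
proof -
  have "4 dvd k" using assms(1,2) by (metis le_imp_power_dvd power2_eq_square numeral_Bit0 mult_2_right)
  moreover have "0 < k" using assms(2) by simp
  ultimately obtain g where g: "is_LPP g" "\<And>s. s \<in> G1 k c \<Longrightarrow> inj (\<lambda>x. g x (s x))"
    using LPP_inj_along_G1 assms(3,5) by metis
  obtain \<beta> where \<beta>: "tuple_of q c f \<beta>" "bij_betw \<beta> {..<q} (G1 k c)" using assms(7) by blast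
  have "orthogonal f g"
    by (rule orthogonal_if_inj_along_tuple[OF \<beta>(1) assms(5)])
      (use g(2) bij_betwE[OF \<beta>(2)] in blast)
  then show ?thesis using g(1) unfolding has_companion_def by blast
qed

end
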